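(* Let $d\ge2$, $r>0$ and $a>\frac{d}{2r^2}$. Let $Y$ be the $\mathbb R^d$-valued process solving $$Y(t)=Y(0)+B_1(t)-2a\int_0^tY(s)\,\mathrm ds+2\int_0^tY(s)\,\mathrm dL_1(s),$$ where $B_1$ is a Brownian motion with covariance $\frac12\mathrm{Id}$, $|Y(0)|\ge r/2$ with $\mathbb E|Y(0)|^2<\infty$, and $L_1$ is a nondecreasing continuous process with $L_1(0)=0$ increasing only when $|Y(t)|=r/2$ (an Ornstein–Uhlenbeck process outside the ball of radius $r/2$, normally reflected on its boundary). Let $\tau_r=\inf\{t\ge0:\ |Y(t)|=r/2\}$. Then for all $t\ge0$, $$\mathbb P(\tau_r>t)\le\frac{4\,\mathbb E(|Y(0)|^2)}{r^2}\,e^{-4\left(a-\frac{d}{2r^2}\right)t}.$$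
   Context: $Y=(X_1-X_2)/2$ describes the relative position of two Brownian hard balls of radius $r/2$ with quadratic attraction; $\tau_r$ is the hitting time of a packing (touching) configuration. *)

theory Defs
  imports "HOL-Probability.Probability"
begin

definition half_brownian_motion ::
  "'a measure \<Rightarrow> (real \<Rightarrow> 'a measure) \<Rightarrow> (real \<Rightarrow> 'a \<Rightarrow> real^'d) \<Rightarrow> bool" where
  "half_brownian_motion M F B \<longleftrightarrow>
     filtration (space M) F \<and> (\<forall>t. sets (F t) \<subseteq> sets M) \<and>
     (\<forall>\<omega>\<in>space M. B 0 \<omega> = 0 \<and> continuous_on {0..} (\<lambda>t. B t \<omega>)) \<and>
     (\<forall>t\<ge>0. B t \<in> borel_measurable (F t)) \<and>
     (\<forall>s t. 0 \<le> s \<and> s < t \<longrightarrow>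
        (\<forall>u::real^'d. u \<noteq> 0 \<longrightarrow>
           distributed M lborel (\<lambda>\<omega>. u \<bullet> (B t \<omega> - B s \<omega>))
             (\<lambda>x. ennreal (normal_density 0 (sqrt ((norm u)\<^sup>2 * (t - s) / 2)) x))) \<and>
        (\<forall>A\<in>sets (F s). \<forall>C\<in>sets (borel :: (real^'d) measure).
           measure M (A \<inter> {\<omega>\<in>space M. B t \<omega> - B s \<omega> \<in> C}) =
           measure M A * measure M {\<omega>\<in>space M. B t \<omega> - B s \<omega> \<in> C}))"

text \<open>Lebesgue--Stieltjes measure of a path of L on [0,\<infinity>), extended by L(0)=0 to negative times.\<close>
definition LS_measure :: "(real \<Rightarrow> real) \<Rightarrow> real measure" where
  "LS_measure l = interval_measure (\<lambda>s. l (max 0 s))"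

text \<open>Hitting time of the sphere of radius r/2 (infimum of the empty set is \<infinity>).\<close>
definition hit_time :: "(real \<Rightarrow> 'a \<Rightarrow> 'b::real_normed_vector) \<Rightarrow> real \<Rightarrow> 'a \<Rightarrow> ereal" where
  "hit_time Y r \<omega> = (INF s \<in> {s. 0 \<le> s \<and> norm (Y s \<omega>) = r / 2}. ereal s)"

end

theory Submission
  imports Defs "HOL-Real_Asymp.Real_Asymp"
begin

text \<open>
  Before the hitting time \<tau> the local time L does not increase, so on {\<tau> > t} the path of Y
  solves the Ornstein--Uhlenbeck equation dY = dB - 2aY dt on [0,t] and stays strictly outside
  the ball of radius r/2. Let Z be the Euler scheme of this equation with step \<delta> = t/n and A_k
  the event that Z_0, ..., Z_k all lie outside the ball. The Brownian increment is centred,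
  independent of the past and has second moment d\<delta>/2, so
  E[1_{A_k} |Z_{k+1}|^2] = (1 - 2a\<delta>)^2 E[1_{A_k} |Z_k|^2] + P(A_k) d\<delta>/2, and Chebyshev's
  inequality on A_k gives P(A_k) \<le> 4/r^2 E[1_{A_k} |Z_k|^2]. Hence
  P(A_n) \<le> 4 E|Y_0|^2 / r^2 ((1 - 2at/n)^2 + 2dt/(nr^2))^n, which tends to the claimed bound.
  The Euler scheme converges uniformly on [0,t] to every Ornstein--Uhlenbeck path, so each path
  with \<tau> > t lies in A_n for all large n, and a Fatou argument for events concludes.
\<close>

lemma (in prob_space) distributed_normal_centered_moments:
  fixes X :: "'a \<Rightarrow> real"
  assumes \<sigma>: "\<sigma> > 0" and X: "distributed M lborel X (\<lambda>x. ennreal (normal_density 0 \<sigma> x))"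
  shows "integrable M X" "expectation X = 0"
    and "integrable M (\<lambda>\<omega>. (X \<omega>)\<^sup>2)" "expectation (\<lambda>\<omega>. (X \<omega>)\<^sup>2) = \<sigma>\<^sup>2"
proof -
  show "integrable M X"
    using distributed_integrable_var[OF X] integrable_normal_moment_nz_1[OF \<sigma>]
      normal_density_nonneg by blast
  show "expectation X = 0"
    using normal_distributed_expectation[OF \<sigma>] X by simp
  have "integrable lborel (\<lambda>x. normal_density 0 \<sigma> x * x\<^sup>2)"
    using integrable_normal_moment[OF \<sigma>, of 0 2] by simp
  then show "integrable M (\<lambda>\<omega>. (X \<omega>)\<^sup>2)"
    using distributed_integrable[OF X, of "\<lambda>x. x\<^sup>2"] normal_density_nonneg by simp
  have "(\<integral>x. normal_density 0 \<sigma> x * (x - 0) ^ (2 * 1) \<partial>lborel)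
      = fact (2 * 1) / ((2 / \<sigma>\<^sup>2) ^ 1 * fact 1)"
    by (rule integral_normal_moment_even[OF \<sigma>])
  then have "(\<integral>x. normal_density 0 \<sigma> x * x\<^sup>2 \<partial>lborel) = \<sigma>\<^sup>2"
    using \<sigma> by (simp add: field_simps power2_eq_square)
  then show "expectation (\<lambda>\<omega>. (X \<omega>)\<^sup>2) = \<sigma>\<^sup>2"
    using distributed_integral[OF X, of "\<lambda>x. x\<^sup>2"] normal_density_nonneg by simp
qed

lemma (in prob_space) indep_var_from_independent_subalgebra:
  fixes X :: "'a \<Rightarrow> real" and D :: "'a \<Rightarrow> 'b::topological_space"
    and g :: "'b \<Rightarrow> real"
  assumes G: "subalgebra M G" and X: "X \<in> borel_measurable G"
    and D: "D \<in> borel_measurable M" and g: "g \<in> borel_measurable borel"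
    and indep: "\<forall>A\<in>sets G. \<forall>C\<in>sets borel.
      prob (A \<inter> {\<omega>\<in>space M. D \<omega> \<in> C}) = prob A * prob {\<omega>\<in>space M. D \<omega> \<in> C}"
  shows "indep_var borel X borel (\<lambda>\<omega>. g (D \<omega>))"
  unfolding indep_var_eq
proof (intro conjI indep_setI)
  have "{X -` A \<inter> space M |A. A \<in> sets borel} \<subseteq> sets G"
    using measurable_sets[OF X] G by (auto simp: subalgebra_def)
  then have sX: "sigma_sets (space M) {X -` A \<inter> space M |A. A \<in> sets borel} \<subseteq> sets G"
    using G sets.sigma_sets_subset[of _ G] by (auto simp: subalgebra_def)
  then show "sigma_sets (space M) {X -` A \<inter> space M |A. A \<in> sets borel} \<subseteq> events"
    using G by (auto simp: subalgebra_def)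
  have gD: "(\<lambda>\<omega>. g (D \<omega>)) \<in> borel_measurable M"
    using D g by measurable
  have sgD: "sigma_sets (space M) {(\<lambda>\<omega>. g (D \<omega>)) -` A \<inter> space M |A. A \<in> sets borel}
      = {(\<lambda>\<omega>. g (D \<omega>)) -` A \<inter> space M |A. A \<in> sets (borel :: real measure)}"
    using sigma_sets_vimage_commute[of "\<lambda>\<omega>. g (D \<omega>)" "space M" UNIV "sets borel"]
      sets.sigma_sets_eq[of "borel :: real measure"] by simp
  then show "sigma_sets (space M) {(\<lambda>\<omega>. g (D \<omega>)) -` A \<inter> space M |A. A \<in> sets borel} \<subseteq> events"
    using gD by auto
  show "random_variable borel X"
    using measurable_from_subalg[OF G X] by simp
  show "random_variable borel (\<lambda>\<omega>. g (D \<omega>))"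
    using gD by simp
  fix a b
  assume a: "a \<in> sigma_sets (space M) {X -` A \<inter> space M |A. A \<in> sets borel}"
    and b: "b \<in> sigma_sets (space M) {(\<lambda>\<omega>. g (D \<omega>)) -` A \<inter> space M |A. A \<in> sets borel}"
  from b sgD obtain C where C: "C \<in> sets (borel :: real measure)"
    and b_eq: "b = {\<omega>\<in>space M. D \<omega> \<in> g -` C}" by auto
  have "g -` C \<in> sets borel"
    using measurable_sets[OF g C] by simp
  then show "prob (a \<inter> b) = prob a * prob b"
    using indep a sX b_eq by blast
qed

lemma
  assumes "half_brownian_motion M F B"
  shows half_brownian_motion_subalgebra: "subalgebra M (F t)"
    and half_brownian_motion_subalgebra_mono: "s \<le> t \<Longrightarrow> subalgebra (F t) (F s)"
    and half_brownian_motion_adapted: "0 \<le> t \<Longrightarrow> B t \<in> borel_measurable (F t)"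
  using assms filtration.sets_F_mono[of "space M" F s t]
  by (auto simp: half_brownian_motion_def subalgebra_def filtration.space_F)

lemma half_brownian_motion_measurable:
  assumes "half_brownian_motion M F B" and "0 \<le> t"
  shows "B t \<in> borel_measurable M"
proof -
  have "subalgebra M (F t)"
    using assms(1) by (rule half_brownian_motion_subalgebra)
  then show ?thesis
    using half_brownian_motion_adapted[OF assms] by (rule measurable_from_subalg)
qed

lemma half_brownian_increment_component_moments:
  fixes B :: "real \<Rightarrow> 'a \<Rightarrow> real^'d" and X :: "'a \<Rightarrow> real"
  assumes "prob_space M" and BM: "half_brownian_motion M F B" and "0 \<le> s" "s < u"
    and X: "X \<in> borel_measurable (F s)" "integrable M X"
  shows "has_bochner_integral M (\<lambda>\<omega>. X \<omega> * (B u \<omega> - B s \<omega>) $ i) 0"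
    and "has_bochner_integral M (\<lambda>\<omega>. X \<omega> * ((B u \<omega> - B s \<omega>) $ i)\<^sup>2)
           ((\<integral>\<omega>. X \<omega> \<partial>M) * ((u - s) / 2))"
proof -
  interpret prob_space M by fact
  have G: "subalgebra M (F s)"
    using half_brownian_motion_subalgebra[OF BM] .
  have D: "(\<lambda>\<omega>. B u \<omega> - B s \<omega>) \<in> borel_measurable M"
    using half_brownian_motion_measurable[OF BM] \<open>0 \<le> s\<close> \<open>s < u\<close>
    by (intro borel_measurable_diff) simp_all
  from BM \<open>0 \<le> s\<close> \<open>s < u\<close> have indep: "\<forall>A\<in>sets (F s). \<forall>C\<in>sets borel.
      prob (A \<inter> {\<omega>\<in>space M. B u \<omega> - B s \<omega> \<in> C})
        = prob A * prob {\<omega>\<in>space M. B u \<omega> - B s \<omega> \<in> C}"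
    and increment_normal: "\<And>v. v \<noteq> 0 \<Longrightarrow> distributed M lborel (\<lambda>\<omega>. v \<bullet> (B u \<omega> - B s \<omega>))
           (\<lambda>x. ennreal (normal_density 0 (sqrt ((norm v)\<^sup>2 * (u - s) / 2)) x))"
    unfolding half_brownian_motion_def by blast+
  have normal: "distributed M lborel (\<lambda>\<omega>. (B u \<omega> - B s \<omega>) $ i)
      (\<lambda>x. ennreal (normal_density 0 (sqrt ((u - s) / 2)) x))"
    using increment_normal[of "axis i 1"] by (simp add: axis_eq_0_iff cart_eq_inner_axis inner_commute)
  have "sqrt ((u - s) / 2) > 0"
    using \<open>s < u\<close> by simp
  note moments = distributed_normal_centered_moments[OF this normal]
  have indep1: "indep_var borel X borel (\<lambda>\<omega>. (B u \<omega> - B s \<omega>) $ i)"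
    by (rule indep_var_from_independent_subalgebra[OF G X(1) D _ indep]) simp
  have indep2: "indep_var borel X borel (\<lambda>\<omega>. ((B u \<omega> - B s \<omega>) $ i)\<^sup>2)"
    by (rule indep_var_from_independent_subalgebra[OF G X(1) D _ indep]) simp
  show "has_bochner_integral M (\<lambda>\<omega>. X \<omega> * (B u \<omega> - B s \<omega>) $ i) 0"
    using indep_var_lebesgue_integral[OF indep1 X(2) moments(1)]
      indep_var_integrable[OF indep1 X(2) moments(1)] moments(2)
    by (simp add: has_bochner_integral_iff)
  show "has_bochner_integral M (\<lambda>\<omega>. X \<omega> * ((B u \<omega> - B s \<omega>) $ i)\<^sup>2)
      ((\<integral>\<omega>. X \<omega> \<partial>M) * ((u - s) / 2))"
    using indep_var_lebesgue_integral[OF indep2 X(2) moments(3)]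
      indep_var_integrable[OF indep2 X(2) moments(3)] moments(4) \<open>s < u\<close>
    by (simp add: has_bochner_integral_iff)
qed

lemma half_brownian_increment_inner_moment:
  fixes B :: "real \<Rightarrow> 'a \<Rightarrow> real^'d" and g :: "'a \<Rightarrow> real^'d"
  assumes P: "prob_space M" and BM: "half_brownian_motion M F B" and "0 \<le> s" "s \<le> u"
    and g: "g \<in> borel_measurable (F s)" and g_sq: "integrable M (\<lambda>\<omega>. (norm (g \<omega>))\<^sup>2)"
  shows "has_bochner_integral M (\<lambda>\<omega>. g \<omega> \<bullet> (B u \<omega> - B s \<omega>)) 0"
proof (cases "s = u")
  case False
  with \<open>s \<le> u\<close> have "s < u"
    by simp
  interpret prob_space M by fact
  have gi: "(\<lambda>\<omega>. g \<omega> $ i) \<in> borel_measurable (F s)" for i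
    using measurable_compose[OF g, of "\<lambda>v. v $ i" borel] by simp
  have gi_int: "integrable M (\<lambda>\<omega>. g \<omega> $ i)" for i
  proof (rule square_integrable_imp_integrable)
    show "(\<lambda>\<omega>. g \<omega> $ i) \<in> borel_measurable M"
      using measurable_from_subalg[OF half_brownian_motion_subalgebra[OF BM] gi] .
    moreover have "(g \<omega> $ i)\<^sup>2 \<le> (norm (g \<omega>))\<^sup>2" for \<omega>
      using power_mono[OF component_le_norm_cart abs_ge_zero, of "g \<omega>" i 2] by simp
    ultimately show "integrable M (\<lambda>\<omega>. (g \<omega> $ i)\<^sup>2)"
      by (intro Bochner_Integration.integrable_bound[OF g_sq] AE_I2) auto
  qed
  have "has_bochner_integral M (\<lambda>\<omega>. g \<omega> $ i * (B u \<omega> - B s \<omega>) $ i) 0" for i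
    using half_brownian_increment_component_moments(1)[OF P BM \<open>0 \<le> s\<close> \<open>s < u\<close> gi gi_int] .
  then have "has_bochner_integral M (\<lambda>\<omega>. \<Sum>i\<in>UNIV. g \<omega> $ i * (B u \<omega> - B s \<omega>) $ i) (\<Sum>i\<in>(UNIV :: 'd set). 0)"
    by (intro has_bochner_integral_sum)
  then show ?thesis
    by (simp add: inner_vec_def)
qed (simp add: has_bochner_integral_zero)

lemma half_brownian_increment_norm_sq_moment:
  fixes B :: "real \<Rightarrow> 'a \<Rightarrow> real^'d" and X :: "'a \<Rightarrow> real"
  assumes P: "prob_space M" and BM: "half_brownian_motion M F B" and "0 \<le> s" "s \<le> u"
    and X: "X \<in> borel_measurable (F s)" "integrable M X"
  shows "has_bochner_integral M (\<lambda>\<omega>. X \<omega> * (norm (B u \<omega> - B s \<omega>))\<^sup>2)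
           ((\<integral>\<omega>. X \<omega> \<partial>M) * (real CARD('d) * (u - s) / 2))"
proof (cases "s = u")
  case False
  with \<open>s \<le> u\<close> have "s < u"
    by simp
  have "has_bochner_integral M (\<lambda>\<omega>. \<Sum>i\<in>UNIV. X \<omega> * ((B u \<omega> - B s \<omega>) $ i)\<^sup>2)
      (\<Sum>i\<in>(UNIV :: 'd set). (\<integral>\<omega>. X \<omega> \<partial>M) * ((u - s) / 2))"
    using half_brownian_increment_component_moments(2)[OF P BM \<open>0 \<le> s\<close> \<open>s < u\<close> X]
    by (intro has_bochner_integral_sum)
  moreover have "X \<omega> * (norm v)\<^sup>2 = (\<Sum>i\<in>UNIV. X \<omega> * (v $ i)\<^sup>2)" for \<omega> and v :: "real^'d"
    by (simp add: norm_vec_def L2_set_def sum_distrib_left sum_nonneg)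
  ultimately show ?thesis
    by (simp add: mult.left_commute)
qed (simp add: has_bochner_integral_zero)

lemma (in finite_measure) measure_mult_sq_le_second_moment:
  fixes f :: "'a \<Rightarrow> 'b::real_normed_vector"
  assumes A: "A \<in> sets M" and f_sq: "integrable M (\<lambda>\<omega>. (norm (f \<omega>))\<^sup>2)"
    and outside: "\<forall>\<omega>\<in>A. \<rho> \<le> norm (f \<omega>)" and "0 \<le> \<rho>"
  shows "measure M A * \<rho>\<^sup>2 \<le> (\<integral>\<omega>. indicator A \<omega> * (norm (f \<omega>))\<^sup>2 \<partial>M)"
proof -
  have "(\<integral>\<omega>. indicator A \<omega> * \<rho>\<^sup>2 \<partial>M) \<le> (\<integral>\<omega>. indicator A \<omega> * (norm (f \<omega>))\<^sup>2 \<partial>M)"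
  proof (rule integral_mono)
    show "integrable M (\<lambda>\<omega>. indicator A \<omega> * \<rho>\<^sup>2)"
      using A by (intro integrable_mult_left integrable_real_indicator) (auto simp: less_top[symmetric])
    show "integrable M (\<lambda>\<omega>. indicator A \<omega> * (norm (f \<omega>))\<^sup>2)"
      using integrable_mult_indicator[OF A f_sq] by simp
    show "indicator A \<omega> * \<rho>\<^sup>2 \<le> indicator A \<omega> * (norm (f \<omega>))\<^sup>2" for \<omega>
      using outside \<open>0 \<le> \<rho>\<close> by (simp add: indicator_def power_mono)
  qed
  then show ?thesis
    using A by simp
qed

lemma norm_scaleR_add_power2:
  fixes v w :: "'b::real_inner"
  shows "(norm (c *\<^sub>R v + w))\<^sup>2 = c\<^sup>2 * (norm v)\<^sup>2 + 2 * c * (v \<bullet> w) + (norm w)\<^sup>2"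
  unfolding power2_norm_eq_inner
  by (simp add: inner_add_left inner_add_right inner_commute power2_eq_square algebra_simps)

lemma half_brownian_step_second_moment:
  fixes B :: "real \<Rightarrow> 'a \<Rightarrow> real^'d" and f :: "'a \<Rightarrow> real^'d"
  assumes P: "prob_space M" and BM: "half_brownian_motion M F B" and su: "0 \<le> s" "s \<le> u"
    and f: "f \<in> borel_measurable (F s)" and f_sq: "integrable M (\<lambda>\<omega>. (norm (f \<omega>))\<^sup>2)"
    and A: "A \<in> sets (F s)"
  shows "has_bochner_integral M (\<lambda>\<omega>. indicator A \<omega> * (norm (c *\<^sub>R f \<omega> + (B u \<omega> - B s \<omega>)))\<^sup>2)
           (c\<^sup>2 * (\<integral>\<omega>. indicator A \<omega> * (norm (f \<omega>))\<^sup>2 \<partial>M)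
             + measure M A * (real CARD('d) * (u - s) / 2))"
proof -
  interpret prob_space M by fact
  have G: "subalgebra M (F s)"
    using half_brownian_motion_subalgebra[OF BM] .
  then have A_M: "A \<in> sets M"
    using A by (auto simp: subalgebra_def)
  have "integrable M (\<lambda>\<omega>. indicator A \<omega> * (norm (f \<omega>))\<^sup>2)"
    using integrable_mult_indicator[OF A_M f_sq] by simp
  then have "has_bochner_integral M (\<lambda>\<omega>. c\<^sup>2 * (indicator A \<omega> * (norm (f \<omega>))\<^sup>2))
      (c\<^sup>2 * (\<integral>\<omega>. indicator A \<omega> * (norm (f \<omega>))\<^sup>2 \<partial>M))"
    by (intro has_bochner_integral_mult_right has_bochner_integral_integrable)
  moreover have "has_bochner_integral M
      (\<lambda>\<omega>. 2 * c * ((indicator A \<omega> *\<^sub>R f \<omega>) \<bullet> (B u \<omega> - B s \<omega>))) (2 * c * 0)"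
  proof (intro has_bochner_integral_mult_right half_brownian_increment_inner_moment[OF P BM su])
    show "(\<lambda>\<omega>. indicator A \<omega> *\<^sub>R f \<omega>) \<in> borel_measurable (F s)"
      using A f by measurable
    have "(norm (indicator A \<omega> *\<^sub>R f \<omega>))\<^sup>2 = indicator A \<omega> * (norm (f \<omega>))\<^sup>2" for \<omega>
      by (simp add: indicator_def)
    then show "integrable M (\<lambda>\<omega>. (norm (indicator A \<omega> *\<^sub>R f \<omega>))\<^sup>2)"
      using integrable_mult_indicator[OF A_M f_sq] by simp
  qed
  moreover have "has_bochner_integral M (\<lambda>\<omega>. indicator A \<omega> * (norm (B u \<omega> - B s \<omega>))\<^sup>2)
      (measure M A * (real CARD('d) * (u - s) / 2))"
    using half_brownian_increment_norm_sq_moment[OF P BM su, of "indicator A"] A A_M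
    by (simp add: less_top[symmetric])
  ultimately have "has_bochner_integral M (\<lambda>\<omega>. c\<^sup>2 * (indicator A \<omega> * (norm (f \<omega>))\<^sup>2)
        + 2 * c * ((indicator A \<omega> *\<^sub>R f \<omega>) \<bullet> (B u \<omega> - B s \<omega>))
        + indicator A \<omega> * (norm (B u \<omega> - B s \<omega>))\<^sup>2)
      (c\<^sup>2 * (\<integral>\<omega>. indicator A \<omega> * (norm (f \<omega>))\<^sup>2 \<partial>M) + 2 * c * 0
        + measure M A * (real CARD('d) * (u - s) / 2))"
    by (intro has_bochner_integral_add)
  moreover have "indicator A \<omega> * (norm (c *\<^sub>R f \<omega> + (B u \<omega> - B s \<omega>)))\<^sup>2
      = c\<^sup>2 * (indicator A \<omega> * (norm (f \<omega>))\<^sup>2)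
        + 2 * c * ((indicator A \<omega> *\<^sub>R f \<omega>) \<bullet> (B u \<omega> - B s \<omega>))
        + indicator A \<omega> * (norm (B u \<omega> - B s \<omega>))\<^sup>2" for \<omega>
    unfolding norm_scaleR_add_power2 by (simp add: algebra_simps)
  ultimately show ?thesis
    by simp
qed

text \<open>With c = 1 - 2a\<delta> this is the Euler scheme of dZ = dB - 2aZ dt with step \<delta>.\<close>

fun euler_scheme ::
  "real \<Rightarrow> real \<Rightarrow> (real \<Rightarrow> 'a \<Rightarrow> 'v::real_vector) \<Rightarrow> ('a \<Rightarrow> 'v) \<Rightarrow> nat \<Rightarrow> 'a \<Rightarrow> 'v" where
  "euler_scheme c \<delta> B Z0 0 \<omega> = Z0 \<omega>"
| "euler_scheme c \<delta> B Z0 (Suc k) \<omega> =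
     c *\<^sub>R euler_scheme c \<delta> B Z0 k \<omega> + (B (real (Suc k) * \<delta>) \<omega> - B (real k * \<delta>) \<omega>)"

definition stays_outside :: "'a set \<Rightarrow> real \<Rightarrow> (nat \<Rightarrow> 'a \<Rightarrow> 'v::real_normed_vector) \<Rightarrow> nat \<Rightarrow> 'a set"
  where "stays_outside \<Omega> \<rho> Z n = {\<omega>\<in>\<Omega>. \<forall>k\<le>n. \<rho> \<le> norm (Z k \<omega>)}"

lemma stays_outside_Suc:
  "stays_outside \<Omega> \<rho> Z (Suc n) = stays_outside \<Omega> \<rho> Z n \<inter> {\<omega>\<in>\<Omega>. \<rho> \<le> norm (Z (Suc n) \<omega>)}"
  by (auto simp: stays_outside_def le_Suc_eq)

lemma euler_scheme_adapted:
  fixes B :: "real \<Rightarrow> 'a \<Rightarrow> real^'d"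
  assumes BM: "half_brownian_motion M F B" and "0 \<le> \<delta>" and Z0: "Z0 \<in> borel_measurable (F 0)"
  shows "euler_scheme c \<delta> B Z0 k \<in> borel_measurable (F (real k * \<delta>))"
proof (induction k)
  case 0
  then show ?case
    using Z0 by simp
next
  case (Suc k)
  have "real k * \<delta> \<le> real (Suc k) * \<delta>"
    using \<open>0 \<le> \<delta>\<close> by (simp add: mult_right_mono)
  then have "euler_scheme c \<delta> B Z0 k \<in> borel_measurable (F (real (Suc k) * \<delta>))"
      and "B (real k * \<delta>) \<in> borel_measurable (F (real (Suc k) * \<delta>))"
    using Suc.IH half_brownian_motion_adapted[OF BM, of "real k * \<delta>"] \<open>0 \<le> \<delta>\<close>
    by (auto intro: measurable_from_subalg[OF half_brownian_motion_subalgebra_mono[OF BM]])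
  moreover have "B (real (Suc k) * \<delta>) \<in> borel_measurable (F (real (Suc k) * \<delta>))"
    using half_brownian_motion_adapted[OF BM] \<open>0 \<le> \<delta>\<close> by simp
  ultimately show ?case
    by simp
qed

lemma stays_outside_euler_scheme_sets:
  fixes B :: "real \<Rightarrow> 'a \<Rightarrow> real^'d"
  assumes BM: "half_brownian_motion M F B" and "0 \<le> \<delta>" and Z0: "Z0 \<in> borel_measurable (F 0)"
  shows "stays_outside (space M) \<rho> (euler_scheme c \<delta> B Z0) k \<in> sets (F (real k * \<delta>))"
proof (induction k)
  case 0
  have "stays_outside (space M) \<rho> (euler_scheme c \<delta> B Z0) 0 = {\<omega>\<in>space (F 0). \<rho> \<le> norm (Z0 \<omega>)}"
    using half_brownian_motion_subalgebra[OF BM] by (auto simp: stays_outside_def subalgebra_def)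
  also have "\<dots> \<in> sets (F 0)"
    using Z0 by measurable
  finally show ?case
    by simp
next
  case (Suc k)
  have "real k * \<delta> \<le> real (Suc k) * \<delta>"
    using \<open>0 \<le> \<delta>\<close> by (simp add: mult_right_mono)
  then have "stays_outside (space M) \<rho> (euler_scheme c \<delta> B Z0) k \<in> sets (F (real (Suc k) * \<delta>))"
    using Suc.IH half_brownian_motion_subalgebra_mono[OF BM] by (auto simp: subalgebra_def)
  moreover have "{\<omega>\<in>space (F (real (Suc k) * \<delta>)). \<rho> \<le> norm (euler_scheme c \<delta> B Z0 (Suc k) \<omega>)}
      \<in> sets (F (real (Suc k) * \<delta>))"
    using euler_scheme_adapted[OF BM \<open>0 \<le> \<delta>\<close> Z0, of c "Suc k"] by measurable
  ultimately show ?case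
    using half_brownian_motion_subalgebra[OF BM]
    by (auto simp: stays_outside_Suc subalgebra_def)
qed

lemma euler_scheme_square_integrable:
  fixes B :: "real \<Rightarrow> 'a \<Rightarrow> real^'d"
  assumes P: "prob_space M" and BM: "half_brownian_motion M F B" and \<delta>: "0 \<le> \<delta>"
    and Z0: "Z0 \<in> borel_measurable (F 0)" and Z0_sq: "integrable M (\<lambda>\<omega>. (norm (Z0 \<omega>))\<^sup>2)"
  shows "integrable M (\<lambda>\<omega>. (norm (euler_scheme c \<delta> B Z0 k \<omega>))\<^sup>2)"
proof (induction k)
  case 0
  then show ?case
    using Z0_sq by simp
next
  case (Suc k)
  have "0 \<le> real k * \<delta>" "real k * \<delta> \<le> real (Suc k) * \<delta>"
    using \<delta> by (simp_all add: mult_right_mono)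
  from half_brownian_step_second_moment[OF P BM this euler_scheme_adapted[OF BM \<delta> Z0] Suc.IH
      sets.top, of c]
  have "integrable M (\<lambda>\<omega>. indicator (space M) \<omega> * (norm (euler_scheme c \<delta> B Z0 (Suc k) \<omega>))\<^sup>2)"
    using half_brownian_motion_subalgebra[OF BM]
    by (auto simp: has_bochner_integral_iff subalgebra_def)
  then show ?case
    by (rule Bochner_Integration.integrable_cong[OF refl, THEN iffD1, rotated])
      (simp add: indicator_def)
qed

lemma euler_scheme_stays_outside_second_moment:
  fixes B :: "real \<Rightarrow> 'a \<Rightarrow> real^'d" and c :: real
  assumes P: "prob_space M" and BM: "half_brownian_motion M F B" and \<delta>: "0 \<le> \<delta>" and "r > 0"
    and Z0: "Z0 \<in> borel_measurable (F 0)" and Z0_sq: "integrable M (\<lambda>\<omega>. (norm (Z0 \<omega>))\<^sup>2)"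
  defines "Z \<equiv> euler_scheme c \<delta> B Z0" and "A \<equiv> stays_outside (space M) (r / 2) (euler_scheme c \<delta> B Z0)"
  shows "(\<integral>\<omega>. indicator (A k) \<omega> * (norm (Z k \<omega>))\<^sup>2 \<partial>M)
           \<le> (c\<^sup>2 + 2 * real CARD('d) * \<delta> / r\<^sup>2) ^ k * (\<integral>\<omega>. (norm (Z0 \<omega>))\<^sup>2 \<partial>M)"
proof (induction k)
  interpret prob_space M by fact
  have A_sets: "A k \<in> sets (F (real k * \<delta>))" for k
    unfolding A_def using stays_outside_euler_scheme_sets[OF BM \<delta> Z0] .
  then have A_M: "A k \<in> sets M" for k
    using half_brownian_motion_subalgebra[OF BM] by (auto simp: subalgebra_def)
  have Z_sq: "integrable M (\<lambda>\<omega>. (norm (Z k \<omega>))\<^sup>2)" for k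
    unfolding Z_def using euler_scheme_square_integrable[OF P BM \<delta> Z0 Z0_sq] .
  {
    case 0
    show ?case
      using integrable_mult_indicator[OF A_M Z0_sq] Z0_sq
      by (simp add: Z_def, intro integral_mono) (auto simp: indicator_def)
  next
    case (Suc k)
    let ?I = "\<integral>\<omega>. indicator (A k) \<omega> * (norm (Z k \<omega>))\<^sup>2 \<partial>M"
    have "0 \<le> real k * \<delta>" "real k * \<delta> \<le> real (Suc k) * \<delta>"
      using \<delta> by (simp_all add: mult_right_mono)
    note step = half_brownian_step_second_moment[OF P BM this
        euler_scheme_adapted[OF BM \<delta> Z0] Z_sq[unfolded Z_def] A_sets, of c]
    have "A (Suc k) \<subseteq> A k"
      by (auto simp: A_def stays_outside_Suc)
    moreover have "integrable M (\<lambda>\<omega>. indicator (A j) \<omega> * (norm (Z (Suc k) \<omega>))\<^sup>2)" for j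
      using integrable_mult_indicator[OF A_M[of j] Z_sq[of "Suc k"]] by simp
    ultimately have "(\<integral>\<omega>. indicator (A (Suc k)) \<omega> * (norm (Z (Suc k) \<omega>))\<^sup>2 \<partial>M)
        \<le> (\<integral>\<omega>. indicator (A k) \<omega> * (norm (Z (Suc k) \<omega>))\<^sup>2 \<partial>M)"
      by (intro integral_mono) (auto simp: indicator_def)
    also have "\<dots> = c\<^sup>2 * ?I + measure M (A k) * (real CARD('d) * \<delta> / 2)"
      using step by (simp add: has_bochner_integral_iff Z_def algebra_simps)
    also have "\<dots> \<le> (c\<^sup>2 + 2 * real CARD('d) * \<delta> / r\<^sup>2) * ?I"
    proof -
      have "measure M (A k) * (r / 2)\<^sup>2 \<le> ?I"
        using measure_mult_sq_le_second_moment[OF A_M Z_sq] \<open>r > 0\<close>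
        by (auto simp: A_def Z_def stays_outside_def)
      then have "measure M (A k) * (real CARD('d) * \<delta> / 2) \<le> 2 * real CARD('d) * \<delta> / r\<^sup>2 * ?I"
        using \<open>r > 0\<close> \<delta> mult_right_mono[of _ _ "2 * real CARD('d) * \<delta> / r\<^sup>2"]
        by (fastforce simp: field_simps power2_eq_square)
      then show ?thesis
        by (simp add: distrib_right)
    qed
    also have "\<dots> \<le> (c\<^sup>2 + 2 * real CARD('d) * \<delta> / r\<^sup>2) ^ Suc k * (\<integral>\<omega>. (norm (Z0 \<omega>))\<^sup>2 \<partial>M)"
      using Suc.IH \<delta> \<open>r > 0\<close> by (simp add: mult_left_mono mult.assoc)
    finally show ?case .
  }
qed

lemma euler_scheme_stays_outside_prob:
  fixes B :: "real \<Rightarrow> 'a \<Rightarrow> real^'d" and c :: real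
  assumes P: "prob_space M" and BM: "half_brownian_motion M F B" and \<delta>: "0 \<le> \<delta>" and "r > 0"
    and Z0: "Z0 \<in> borel_measurable (F 0)" and Z0_sq: "integrable M (\<lambda>\<omega>. (norm (Z0 \<omega>))\<^sup>2)"
  shows "stays_outside (space M) (r / 2) (euler_scheme c \<delta> B Z0) n \<in> sets M"
    and "measure M (stays_outside (space M) (r / 2) (euler_scheme c \<delta> B Z0) n)
           \<le> 4 * (\<integral>\<omega>. (norm (Z0 \<omega>))\<^sup>2 \<partial>M) / r\<^sup>2 * (c\<^sup>2 + 2 * real CARD('d) * \<delta> / r\<^sup>2) ^ n"
proof -
  interpret prob_space M by fact
  let ?A = "stays_outside (space M) (r / 2) (euler_scheme c \<delta> B Z0) n"
  show A_M: "?A \<in> sets M"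
    using stays_outside_euler_scheme_sets[OF BM \<delta> Z0, of "r / 2" c n]
      half_brownian_motion_subalgebra[OF BM]
    by (auto simp: subalgebra_def)
  have "measure M ?A * (r / 2)\<^sup>2 \<le> (\<integral>\<omega>. indicator ?A \<omega> * (norm (euler_scheme c \<delta> B Z0 n \<omega>))\<^sup>2 \<partial>M)"
    using measure_mult_sq_le_second_moment[OF A_M euler_scheme_square_integrable[OF P BM \<delta> Z0 Z0_sq]]
      \<open>r > 0\<close> by (auto simp: stays_outside_def)
  also have "\<dots> \<le> (c\<^sup>2 + 2 * real CARD('d) * \<delta> / r\<^sup>2) ^ n * (\<integral>\<omega>. (norm (Z0 \<omega>))\<^sup>2 \<partial>M)"
    using euler_scheme_stays_outside_second_moment[OF P BM \<delta> \<open>r > 0\<close> Z0 Z0_sq] .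
  finally show "measure M ?A
      \<le> 4 * (\<integral>\<omega>. (norm (Z0 \<omega>))\<^sup>2 \<partial>M) / r\<^sup>2 * (c\<^sup>2 + 2 * real CARD('d) * \<delta> / r\<^sup>2) ^ n"
    using \<open>r > 0\<close> by (simp add: field_simps power2_eq_square)
qed

lemma ou_euler_local_error:
  fixes y b :: "real \<Rightarrow> 'v::euclidean_space"
  assumes "0 \<le> a" "0 \<le> p" "p \<le> q" and y: "continuous_on {0..q} y"
    and eq_p: "y p = y0 + b p - (2 * a) *\<^sub>R integral {0..p} y"
    and eq_q: "y q = y0 + b q - (2 * a) *\<^sub>R integral {0..q} y"
    and close: "\<forall>v\<in>{p..q}. norm (y v - y p) \<le> \<epsilon>"
  shows "norm (y q - ((1 - 2 * a * (q - p)) *\<^sub>R z + (b q - b p)))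
           \<le> \<bar>1 - 2 * a * (q - p)\<bar> * norm (y p - z) + 2 * a * (\<epsilon> * (q - p))"
proof -
  define I where "I = integral {p..q} (\<lambda>v. y v - y p)"
  have y_int: "y integrable_on {p..q}"
    using y \<open>0 \<le> p\<close> by (intro integrable_continuous_interval) (auto intro: continuous_on_subset)
  have combine: "integral {0..p} y + integral {p..q} y = integral {0..q} y"
    using y \<open>0 \<le> p\<close> \<open>p \<le> q\<close>
    by (intro Henstock_Kurzweil_Integration.integral_combine integrable_continuous_interval) auto
  have "y q - y p = (b q - b p) - (2 * a) *\<^sub>R integral {p..q} y"
    unfolding eq_q eq_p combine[symmetric] by (simp add: algebra_simps)
  then have yq: "y q = (b q - b p) - (2 * a) *\<^sub>R integral {p..q} y + y p"
    by (simp only: diff_eq_eq)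
  have Iy: "integral {p..q} y = (q - p) *\<^sub>R y p + I"
    unfolding I_def using y_int \<open>p \<le> q\<close>
    by (subst Henstock_Kurzweil_Integration.integral_diff) (auto simp: content_real)
  have error_eq: "y q - ((1 - 2 * a * (q - p)) *\<^sub>R z + (b q - b p))
      = (1 - 2 * a * (q - p)) *\<^sub>R (y p - z) - (2 * a) *\<^sub>R I"
    unfolding yq Iy by (simp add: algebra_simps)
  have I_bound: "norm I \<le> \<epsilon> * (q - p)"
  proof -
    have "0 \<le> \<epsilon>"
      using close \<open>p \<le> q\<close> by (metis atLeastAtMost_iff diff_self norm_zero order_refl)
    moreover have "((\<lambda>v. y v - y p) has_integral I) {p..q}"
      unfolding I_def using y_int
      by (intro integrable_integral Henstock_Kurzweil_Integration.integrable_diff integrable_const_ivl)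
    ultimately have "norm I \<le> \<epsilon> * Henstock_Kurzweil_Integration.content {p..q}"
      using close by (intro has_integral_bound_real[of _ "{}"]) auto
    then show ?thesis
      using \<open>p \<le> q\<close> by (simp add: content_real)
  qed
  have "norm (y q - ((1 - 2 * a * (q - p)) *\<^sub>R z + (b q - b p)))
      \<le> norm ((1 - 2 * a * (q - p)) *\<^sub>R (y p - z)) + norm ((2 * a) *\<^sub>R I)"
    unfolding error_eq by (rule norm_triangle_ineq4)
  also have "\<dots> \<le> \<bar>1 - 2 * a * (q - p)\<bar> * norm (y p - z) + 2 * a * (\<epsilon> * (q - p))"
    using I_bound \<open>0 \<le> a\<close> by (simp add: mult_left_mono)
  finally show ?thesis .
qed

lemma euler_scheme_error_bound:
  fixes y :: "real \<Rightarrow> 'v::euclidean_space" and B :: "real \<Rightarrow> 'a \<Rightarrow> 'v"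
  assumes "0 \<le> a" "0 \<le> \<delta>" and y: "continuous_on {0..real n * \<delta>} y"
    and eq: "\<forall>s\<in>{0..real n * \<delta>}. y s = Z0 \<omega> + B s \<omega> - (2 * a) *\<^sub>R integral {0..s} y"
    and y0: "y 0 = Z0 \<omega>"
    and close: "\<forall>u\<in>{0..real n * \<delta>}. \<forall>v\<in>{0..real n * \<delta>}. \<bar>u - v\<bar> \<le> \<delta> \<longrightarrow> norm (y u - y v) \<le> \<epsilon>"
  shows "k \<le> n \<Longrightarrow>
    norm (y (real k * \<delta>) - euler_scheme (1 - 2 * a * \<delta>) \<delta> B Z0 k \<omega>) + \<epsilon> \<le> (1 + 2 * a * \<delta>) ^ k * \<epsilon>"
proof (induction k)
  case 0
  then show ?case
    using y0 by simp
next
  case (Suc k)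
  let ?p = "real k * \<delta>" and ?q = "real (Suc k) * \<delta>"
  have pq: "0 \<le> ?p" "?p \<le> ?q" "?q - ?p = \<delta>"
    using \<open>0 \<le> \<delta>\<close> by (auto simp: algebra_simps)
  have "?q \<le> real n * \<delta>"
    using Suc.prems \<open>0 \<le> \<delta>\<close> by (intro mult_right_mono) auto
  let ?e = "\<lambda>j. norm (y (real j * \<delta>) - euler_scheme (1 - 2 * a * \<delta>) \<delta> B Z0 j \<omega>)"
  have "?e (Suc k) \<le> \<bar>1 - 2 * a * \<delta>\<bar> * ?e k + 2 * a * (\<epsilon> * \<delta>)"
  proof -
    have sub: "{0..?q} \<subseteq> {0..real n * \<delta>}"
      using \<open>?q \<le> real n * \<delta>\<close> by auto
    have "continuous_on {0..?q} y"
      using y sub by (rule continuous_on_subset)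
    moreover have "?p \<in> {0..real n * \<delta>}" "?q \<in> {0..real n * \<delta>}"
      using pq sub by auto
    moreover have "\<forall>v\<in>{?p..?q}. norm (y v - y ?p) \<le> \<epsilon>"
    proof
      fix v
      assume v: "v \<in> {?p..?q}"
      then have "?p \<le> v" "v \<le> ?q"
        by auto
      then have "\<bar>v - ?p\<bar> \<le> \<delta>" "v \<in> {0..real n * \<delta>}" "?p \<in> {0..real n * \<delta>}"
        using pq sub order_trans[OF pq(1) \<open>?p \<le> v\<close>] by auto
      then show "norm (y v - y ?p) \<le> \<epsilon>"
        using close by blast
    qed
    ultimately show ?thesis
      using ou_euler_local_error[OF \<open>0 \<le> a\<close> pq(1,2), of y "Z0 \<omega>" "\<lambda>s. B s \<omega>" \<epsilon>
          "euler_scheme (1 - 2 * a * \<delta>) \<delta> B Z0 k \<omega>"] eq pq(3)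
      by simp
  qed
  also have "\<dots> \<le> (1 + 2 * a * \<delta>) * ?e k + 2 * a * (\<epsilon> * \<delta>)"
    using \<open>0 \<le> a\<close> \<open>0 \<le> \<delta>\<close> by (intro add_right_mono mult_right_mono) (auto simp: abs_le_iff)
  finally have "?e (Suc k) + \<epsilon> \<le> (1 + 2 * a * \<delta>) * (?e k + \<epsilon>)"
    by (simp add: algebra_simps)
  also have "\<dots> \<le> (1 + 2 * a * \<delta>) ^ Suc k * \<epsilon>"
    using Suc \<open>0 \<le> a\<close> \<open>0 \<le> \<delta>\<close> mult_left_mono[of _ _ "1 + 2 * a * \<delta>"]
    by (simp add: mult.assoc)
  finally show ?case .
qed

lemma euler_scheme_eventually_outside:
  fixes y :: "real \<Rightarrow> 'v::euclidean_space" and B :: "real \<Rightarrow> 'a \<Rightarrow> 'v"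
  assumes "0 \<le> t" "0 \<le> a" and y: "continuous_on {0..t} y"
    and eq: "\<forall>s\<in>{0..t}. y s = Z0 \<omega> + B s \<omega> - (2 * a) *\<^sub>R integral {0..s} y"
    and y0: "y 0 = Z0 \<omega>" and outside: "\<forall>s\<in>{0..t}. \<rho> < norm (y s)"
  shows "\<forall>\<^sub>F n in sequentially.
           \<forall>k\<le>n. \<rho> \<le> norm (euler_scheme (1 - 2 * a * (t / real n)) (t / real n) B Z0 k \<omega>)"
proof -
  obtain s0 where s0: "s0 \<in> {0..t}" and s0_min: "\<And>s. s \<in> {0..t} \<Longrightarrow> norm (y s0) \<le> norm (y s)"
    using continuous_attains_inf[of "{0..t}" "\<lambda>s. norm (y s)"] continuous_on_norm[OF y] \<open>0 \<le> t\<close>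
    by auto
  define \<eta> where "\<eta> = norm (y s0) - \<rho>"
  \<comment> \<open>the Euler error grows at most by the factor (1 + 2a\<delta>)^n \<le> exp (2at)\<close>
  define \<epsilon> where "\<epsilon> = \<eta> / exp (2 * a * t)"
  have "\<epsilon> > 0"
    unfolding \<epsilon>_def \<eta>_def using outside s0 by simp
  moreover have "uniformly_continuous_on {0..t} y"
    using y by (intro compact_uniformly_continuous) auto
  ultimately obtain d where "d > 0"
    and d: "\<And>u v. u \<in> {0..t} \<Longrightarrow> v \<in> {0..t} \<Longrightarrow> dist v u < d \<Longrightarrow> dist (y v) (y u) < \<epsilon>"
    unfolding uniformly_continuous_on_def by metis
  have "\<forall>\<^sub>F n in sequentially. 0 < n \<and> t / real n < d"
    using order_tendstoD(2)[OF lim_const_over_n[of t] \<open>d > 0\<close>] eventually_gt_at_top[of 0]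
    by eventually_elim auto
  then show ?thesis
  proof eventually_elim
    case (elim n)
    define \<delta> where "\<delta> = t / real n"
    have n\<delta>: "real n * \<delta> = t"
      unfolding \<delta>_def using elim by simp
    have "0 \<le> \<delta>"
      unfolding \<delta>_def using \<open>0 \<le> t\<close> by simp
    have y': "continuous_on {0..real n * \<delta>} y"
      and eq': "\<forall>s\<in>{0..real n * \<delta>}. y s = Z0 \<omega> + B s \<omega> - (2 * a) *\<^sub>R integral {0..s} y"
      using y eq unfolding n\<delta> .
    have close: "\<forall>u\<in>{0..real n * \<delta>}. \<forall>v\<in>{0..real n * \<delta>}. \<bar>u - v\<bar> \<le> \<delta> \<longrightarrow> norm (y u - y v) \<le> \<epsilon>"
      using d elim unfolding n\<delta> \<delta>_def by (force simp: dist_norm)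
    show ?case
    proof (intro allI impI)
      fix k
      assume "k \<le> n"
      let ?Z = "euler_scheme (1 - 2 * a * \<delta>) \<delta> B Z0 k \<omega>"
      have "norm (y (real k * \<delta>) - ?Z) + \<epsilon> \<le> (1 + 2 * a * \<delta>) ^ k * \<epsilon>"
        by (intro euler_scheme_error_bound[where n = n] \<open>0 \<le> a\<close> \<open>0 \<le> \<delta>\<close> y' eq' y0 close \<open>k \<le> n\<close>)
      also have "\<dots> \<le> exp (2 * a * \<delta>) ^ n * \<epsilon>"
        using \<open>k \<le> n\<close> \<open>0 \<le> a\<close> \<open>0 \<le> \<delta>\<close> \<open>\<epsilon> > 0\<close>
        by (intro mult_right_mono order_trans[OF power_increasing power_mono] exp_ge_add_one_self)
          auto
      also have "\<dots> = \<eta>"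
        unfolding \<epsilon>_def exp_of_nat_mult[symmetric] n\<delta>[symmetric] by (simp add: algebra_simps)
      finally have "norm (y (real k * \<delta>) - ?Z) \<le> \<eta>"
        using \<open>\<epsilon> > 0\<close> by simp
      moreover have "real k * \<delta> \<in> {0..t}"
        using \<open>k \<le> n\<close> \<open>0 \<le> \<delta>\<close> n\<delta> by (auto intro: mult_right_mono)
      then have "norm (y s0) \<le> norm (y (real k * \<delta>))"
        by (rule s0_min)
      ultimately show "\<rho> \<le> norm (euler_scheme (1 - 2 * a * (t / real n)) (t / real n) B Z0 k \<omega>)"
        using norm_triangle_ineq2[of "y (real k * \<delta>)" ?Z] unfolding \<eta>_def \<delta>_def by linarith
    qed
  qed
qed

lemma LS_measure_set_integral_eq_0_if_flat:
  fixes l :: "real \<Rightarrow> real" and f :: "real \<Rightarrow> 'b::{banach, second_countable_topology}"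
  assumes l_cont: "continuous_on {0..} l" and l_mono: "\<And>s u. 0 \<le> s \<Longrightarrow> s \<le> u \<Longrightarrow> l s \<le> l u"
    and flat: "l s = l 0" and "0 \<le> s"
  shows "(LINT v:{0..s}|LS_measure l. f v) = 0"
proof -
  define G where "G = (\<lambda>v. l (max 0 v))"
  have G_mono: "G x \<le> G y" if "x \<le> y" for x y
    using l_mono that unfolding G_def by auto
  have "continuous_on UNIV G"
    unfolding G_def by (rule continuous_on_compose2[OF l_cont]) (auto intro: continuous_intros)
  then have G_cont: "continuous (at_right x) G" for x
    by (simp add: continuous_on_eq_continuous_at continuous_at_imp_continuous_at_within)
  have "emeasure (interval_measure G) {-1<..s} = ennreal (G s - G (-1))"
    using \<open>0 \<le> s\<close> by (intro emeasure_interval_measure_Ioc G_mono G_cont) auto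
  also have "G s - G (-1) = 0"
    unfolding G_def using \<open>0 \<le> s\<close> flat by simp
  finally have "{-1<..s} \<in> null_sets (LS_measure l)"
    unfolding LS_measure_def G_def[symmetric] by (simp add: null_sets_def sets_interval_measure)
  then have "AE v in LS_measure l. v \<notin> {0..s}"
    by (rule AE_I') auto
  then have "AE v in LS_measure l. indicator {0..s} v *\<^sub>R f v = 0"
    by eventually_elim simp
  then show ?thesis
    unfolding set_lebesgue_integral_def by (rule integral_eq_zero_AE)
qed

lemma reflected_ou_before_hitting:
  fixes y b :: "real \<Rightarrow> 'v::euclidean_space" and l :: "real \<Rightarrow> real"
  assumes no_hit: "\<forall>s\<in>{0..t}. norm (y s) \<noteq> \<rho>" and outside: "\<forall>s\<ge>0. \<rho> \<le> norm (y s)"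
    and l_flat: "\<forall>s u. 0 \<le> s \<and> s \<le> u \<and> (\<forall>v\<in>{s..u}. norm (y v) \<noteq> \<rho>) \<longrightarrow> l u = l s"
    and l_cont: "continuous_on {0..} l" and l_mono: "\<And>s u. 0 \<le> s \<Longrightarrow> s \<le> u \<Longrightarrow> l s \<le> l u"
    and eq: "\<forall>s\<ge>0. y s = y 0 + b s - (2 * a) *\<^sub>R integral {0..s} y
                        + 2 *\<^sub>R (LINT v:{0..s}|LS_measure l. y v)"
  shows "\<forall>s\<in>{0..t}. \<rho> < norm (y s)"
    and "\<forall>s\<in>{0..t}. y s = y 0 + b s - (2 * a) *\<^sub>R integral {0..s} y"
proof -
  show "\<forall>s\<in>{0..t}. \<rho> < norm (y s)"
  proof
    fix s
    assume "s \<in> {0..t}"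
    then have "\<rho> \<le> norm (y s)" "norm (y s) \<noteq> \<rho>"
      using outside no_hit by auto
    then show "\<rho> < norm (y s)"
      by simp
  qed
  show "\<forall>s\<in>{0..t}. y s = y 0 + b s - (2 * a) *\<^sub>R integral {0..s} y"
  proof
    fix s
    assume s: "s \<in> {0..t}"
    then have "\<forall>v\<in>{0..s}. norm (y v) \<noteq> \<rho>"
      using no_hit by auto
    then have "l s = l 0"
      using l_flat[rule_format, of 0 s] s by simp
    then have "(LINT v:{0..s}|LS_measure l. y v) = 0"
      using s by (intro LS_measure_set_integral_eq_0_if_flat[OF l_cont l_mono]) auto
    then show "y s = y 0 + b s - (2 * a) *\<^sub>R integral {0..s} y"
      using eq[rule_format, of s] s by simp
  qed
qed

lemma hit_time_gt_imp_no_hit: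
  assumes "hit_time Y r \<omega> > ereal t"
  shows "\<forall>s\<in>{0..t}. norm (Y s \<omega>) \<noteq> r / 2"
proof (intro ballI notI)
  fix s
  assume "s \<in> {0..t}" and "norm (Y s \<omega>) = r / 2"
  then have "hit_time Y r \<omega> \<le> ereal t"
    unfolding hit_time_def by (intro INF_lower2[of s]) auto
  then show False
    using assms by simp
qed

lemma euler_scheme_eventually_outside_before_hitting:
  fixes Y B :: "real \<Rightarrow> 'a \<Rightarrow> 'v::euclidean_space" and L :: "real \<Rightarrow> 'a \<Rightarrow> real"
  assumes "\<omega> \<in> \<Omega>" "hit_time Y r \<omega> > ereal t" "0 \<le> t" "0 \<le> a"
    and Y_cont: "continuous_on {0..} (\<lambda>s. Y s \<omega>)"
    and L_cont: "continuous_on {0..} (\<lambda>s. L s \<omega>)"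
    and L_mono: "\<And>s u. 0 \<le> s \<Longrightarrow> s \<le> u \<Longrightarrow> L s \<omega> \<le> L u \<omega>"
    and outside: "\<forall>s\<ge>0. r / 2 \<le> norm (Y s \<omega>)"
    and L_flat: "\<forall>s u. 0 \<le> s \<and> s \<le> u \<and> (\<forall>v\<in>{s..u}. norm (Y v \<omega>) \<noteq> r / 2) \<longrightarrow> L u \<omega> = L s \<omega>"
    and SDE: "\<forall>s\<ge>0. Y s \<omega> = Y 0 \<omega> + B s \<omega> - (2 * a) *\<^sub>R integral {0..s} (\<lambda>v. Y v \<omega>)
                + 2 *\<^sub>R (LINT v:{0..s}|LS_measure (\<lambda>v. L v \<omega>). Y v \<omega>)"
  shows "\<forall>\<^sub>F n in sequentially.
           \<omega> \<in> stays_outside \<Omega> (r / 2) (euler_scheme (1 - 2 * a * (t / real n)) (t / real n) B (Y 0)) n"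
proof -
  note ou = reflected_ou_before_hitting[OF hit_time_gt_imp_no_hit[OF assms(2)] outside L_flat
      L_cont L_mono SDE]
  have "continuous_on {0..t} (\<lambda>s. Y s \<omega>)"
    using Y_cont by (rule continuous_on_subset) auto
  then have "\<forall>\<^sub>F n in sequentially.
      \<forall>k\<le>n. r / 2 \<le> norm (euler_scheme (1 - 2 * a * (t / real n)) (t / real n) B (Y 0) k \<omega>)"
    by (intro euler_scheme_eventually_outside[where y = "\<lambda>s. Y s \<omega>"] \<open>0 \<le> t\<close> \<open>0 \<le> a\<close> ou refl)
  then show ?thesis
    by (rule eventually_mono) (auto simp: stays_outside_def \<open>\<omega> \<in> \<Omega>\<close>)
qed

lemma (in finite_measure) measure_liminf_sets_le_lim:
  fixes A :: "nat \<Rightarrow> 'a set"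
  assumes A: "\<And>n. A n \<in> sets M" and bound: "\<And>n. measure M (A n) \<le> K n" and K: "K \<longlonglongrightarrow> b"
  shows "measure M (\<Union>N. \<Inter>m. A (N + m)) \<le> b"
proof -
  define D where "D N = (\<Inter>m. A (N + m))" for N
  have D_sets: "D N \<in> sets M" for N
    unfolding D_def using A by auto
  have "incseq D"
  proof (rule incseq_SucI, rule subsetI)
    fix N \<omega>
    assume "\<omega> \<in> D N"
    then have "\<omega> \<in> A (N + Suc m)" for m
      unfolding D_def by blast
    then show "\<omega> \<in> D (Suc N)"
      unfolding D_def by simp
  qed
  have D_le: "measure M (D N) \<le> b" for N
  proof (rule LIMSEQ_le_const[OF K], intro exI allI impI)
    fix n
    assume "N \<le> n"
    then have "D N \<subseteq> A (N + (n - N))"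
      unfolding D_def by blast
    then have "measure M (D N) \<le> measure M (A n)"
      using \<open>N \<le> n\<close> A by (intro finite_measure_mono) auto
    then show "measure M (D N) \<le> K n"
      using bound[of n] by linarith
  qed
  have "(\<lambda>N. measure M (D N)) \<longlonglongrightarrow> measure M (\<Union>N. D N)"
    using D_sets \<open>incseq D\<close> by (intro finite_Lim_measure_incseq) auto
  then show ?thesis
    using D_le unfolding D_def by (intro LIMSEQ_le_const2) auto
qed

lemma (in finite_measure) measure_le_lim_if_eventually_mem:
  fixes A :: "nat \<Rightarrow> 'a set"
  assumes A: "\<And>n. A n \<in> sets M" and ev: "AE \<omega> in M. \<omega> \<in> S \<longrightarrow> (\<forall>\<^sub>F n in sequentially. \<omega> \<in> A n)"
    and bound: "\<And>n. measure M (A n) \<le> K n" and K: "K \<longlonglongrightarrow> b"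
  shows "measure M S \<le> b"
proof (cases "S \<in> sets M")
  case True
  let ?U = "\<Union>N. \<Inter>m. A (N + m)"
  from ev obtain N0 where N0: "{\<omega>\<in>space M. \<not> (\<omega> \<in> S \<longrightarrow> (\<forall>\<^sub>F n in sequentially. \<omega> \<in> A n))} \<subseteq> N0"
    "emeasure M N0 = 0" "N0 \<in> sets M"
    by (rule AE_E)
  have "S \<subseteq> ?U \<union> N0"
  proof
    fix \<omega>
    assume "\<omega> \<in> S"
    show "\<omega> \<in> ?U \<union> N0"
    proof (cases "\<omega> \<in> N0")
      case False
      with N0(1) \<open>\<omega> \<in> S\<close> sets.sets_into_space[OF True] have "\<forall>\<^sub>F n in sequentially. \<omega> \<in> A n"
        by blast
      then obtain N where "\<forall>n\<ge>N. \<omega> \<in> A n"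
        unfolding eventually_sequentially by blast
      then have "\<omega> \<in> (\<Inter>m. A (N + m))"
        by simp
      then show ?thesis
        by blast
    qed simp
  qed
  then have "measure M S \<le> measure M (?U \<union> N0)"
    using A N0(3) by (intro finite_measure_mono) auto
  also have "\<dots> \<le> measure M ?U + measure M N0"
    using A N0(3) by (intro measure_Un_le) auto
  also have "measure M N0 = 0"
    using N0(2) by (simp add: measure_def)
  finally show ?thesis
    using measure_liminf_sets_le_lim[OF A bound K] by simp
next
  case False
  have "0 \<le> b"
    using LIMSEQ_le_const[OF K] bound measure_nonneg order_trans by blast
  with False show ?thesis
    by (simp add: measure_notin_sets)
qed

lemma one_plus_over_n_power_tendsto_exp:
  "(\<lambda>n::nat. (1 + x / real n + y / (real n)\<^sup>2) ^ n) \<longlonglongrightarrow> exp x"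
  by real_asymp

lemma euler_second_moment_factor_tendsto:
  "(\<lambda>n::nat. ((1 - 2 * a * (t / real n))\<^sup>2 + 2 * real d * (t / real n) / r\<^sup>2) ^ n)
     \<longlonglongrightarrow> exp (- 4 * (a - real d / (2 * r\<^sup>2)) * t)"
proof -
  have "(1 - 2 * a * (t / real n))\<^sup>2 + 2 * real d * (t / real n) / r\<^sup>2
      = 1 + (- 4 * (a - real d / (2 * r\<^sup>2)) * t) / real n + (4 * a\<^sup>2 * t\<^sup>2) / (real n)\<^sup>2" for n :: nat
    by (cases "r = 0"; cases "n = 0") (simp_all add: field_simps power2_eq_square)
  then show ?thesis
    using one_plus_over_n_power_tendsto_exp by simp
qed

theorem proposition2p5:
  fixes M :: "'a measure" and F :: "real \<Rightarrow> 'a measure"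
    and Y B :: "real \<Rightarrow> 'a \<Rightarrow> real^'d" and L :: "real \<Rightarrow> 'a \<Rightarrow> real"
    and r a t :: real
  assumes "prob_space M"
    and "CARD('d) \<ge> 2"
    and "r > 0"
    and "a > real CARD('d) / (2 * r\<^sup>2)"
    and BM: "half_brownian_motion M F B"
    and Y_adapted: "\<And>s. s \<ge> 0 \<Longrightarrow> Y s \<in> borel_measurable (F s)"
    and L_adapted: "\<And>s. s \<ge> 0 \<Longrightarrow> L s \<in> borel_measurable (F s)"
    and Y_cont: "\<And>\<omega>. \<omega> \<in> space M \<Longrightarrow> continuous_on {0..} (\<lambda>s. Y s \<omega>)"
    and L_cont: "\<And>\<omega>. \<omega> \<in> space M \<Longrightarrow> continuous_on {0..} (\<lambda>s. L s \<omega>)"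
    and L_zero: "\<And>\<omega>. \<omega> \<in> space M \<Longrightarrow> L 0 \<omega> = 0"
    and L_mono: "\<And>\<omega> s u. \<omega> \<in> space M \<Longrightarrow> 0 \<le> s \<Longrightarrow> s \<le> u \<Longrightarrow> L s \<omega> \<le> L u \<omega>"
    and Y0: "\<And>\<omega>. \<omega> \<in> space M \<Longrightarrow> norm (Y 0 \<omega>) \<ge> r / 2"
    and Y0_sq: "integrable M (\<lambda>\<omega>. (norm (Y 0 \<omega>))\<^sup>2)"
    and outside: "AE \<omega> in M. \<forall>s\<ge>0. norm (Y s \<omega>) \<ge> r / 2"
    and L_flat: "AE \<omega> in M. \<forall>s u. 0 \<le> s \<and> s \<le> u \<and> (\<forall>v\<in>{s..u}. norm (Y v \<omega>) \<noteq> r / 2)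
                    \<longrightarrow> L u \<omega> = L s \<omega>"
    and SDE: "AE \<omega> in M. \<forall>s\<ge>0.
       Y s \<omega> = Y 0 \<omega> + B s \<omega> - (2 * a) *\<^sub>R integral {0..s} (\<lambda>v. Y v \<omega>)
                + 2 *\<^sub>R (LINT v:{0..s}|LS_measure (\<lambda>v. L v \<omega>). Y v \<omega>)"
    and "t \<ge> 0"
  shows "measure M {\<omega> \<in> space M. hit_time Y r \<omega> > ereal t}
           \<le> 4 * (\<integral>\<omega>. (norm (Y 0 \<omega>))\<^sup>2 \<partial>M) / r\<^sup>2
              * exp (- 4 * (a - real CARD('d) / (2 * r\<^sup>2)) * t)"
proof -
  interpret prob_space M by fact
  have "0 \<le> real CARD('d) / (2 * r\<^sup>2)"
    by simp
  then have "0 \<le> a"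
    using \<open>a > real CARD('d) / (2 * r\<^sup>2)\<close> by linarith
  define A where "A n = stays_outside (space M) (r / 2)
    (euler_scheme (1 - 2 * a * (t / real n)) (t / real n) B (Y 0)) n" for n :: nat
  define K where "K n = 4 * (\<integral>\<omega>. (norm (Y 0 \<omega>))\<^sup>2 \<partial>M) / r\<^sup>2
    * ((1 - 2 * a * (t / real n))\<^sup>2 + 2 * real CARD('d) * (t / real n) / r\<^sup>2) ^ n" for n :: nat
  note bound = euler_scheme_stays_outside_prob[OF \<open>prob_space M\<close> BM _ \<open>r > 0\<close> Y_adapted[OF order_refl] Y0_sq]
  have "A n \<in> sets M" for n
    unfolding A_def by (rule bound(1)) (use \<open>0 \<le> t\<close> in simp)
  moreover have "AE \<omega> in M. \<omega> \<in> {\<omega> \<in> space M. hit_time Y r \<omega> > ereal t} \<longrightarrow> (\<forall>\<^sub>F n in sequentially. \<omega> \<in> A n)"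
    using outside L_flat SDE
  proof eventually_elim
    case (elim \<omega>)
    show ?case
    proof
      assume "\<omega> \<in> {\<omega> \<in> space M. hit_time Y r \<omega> > ereal t}"
      then have \<omega>: "\<omega> \<in> space M" and "hit_time Y r \<omega> > ereal t"
        by auto
      from euler_scheme_eventually_outside_before_hitting[where L = L and B = B, OF this \<open>0 \<le> t\<close>
          \<open>0 \<le> a\<close> Y_cont[OF \<omega>] L_cont[OF \<omega>] L_mono[OF \<omega>] elim]
      show "\<forall>\<^sub>F n in sequentially. \<omega> \<in> A n"
        unfolding A_def .
    qed
  qed
  moreover have "measure M (A n) \<le> K n" for n
    unfolding A_def K_def by (rule bound(2)) (use \<open>0 \<le> t\<close> in simp)
  moreover have "K \<longlonglongrightarrow> 4 * (\<integral>\<omega>. (norm (Y 0 \<omega>))\<^sup>2 \<partial>M) / r\<^sup>2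
      * exp (- 4 * (a - real CARD('d) / (2 * r\<^sup>2)) * t)"
    unfolding K_def by (intro tendsto_mult_left euler_second_moment_factor_tendsto)
  ultimately show ?thesis
    by (rule measure_le_lim_if_eventually_mem)
qed

end
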